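(* Let $q$ be a prime power and $k,\delta,\alpha$ positive integers with $\alpha\ge2$, $\delta\le(\alpha-1)k$ and $(\alpha-1)\mid(\delta-1)$. Then, with $q,k,\delta,\alpha$ fixed and $n\to\infty$, $$B_q(n,k,\delta;\alpha)=\Theta\!\left(q^{\left(k-\frac{\delta-1}{\alpha-1}\right)n}\right).$$
   Context: For a prime power $q$, $\mathcal{G}_q(n,k)$ denotes the set of all $k$-dimensional subspaces of $\mathbb{F}_q^n$. An $\alpha$-$(n,k,\delta)_q^c$ covering Grassmannian code is a subset $\mathcal{C}\subseteq\mathcal{G}_q(n,k)$ (no repeated codewords) such that every set of $\alpha$ distinct codewords of $\mathcal{C}$ spans a subspace of $\mathbb{F}_q^n$ of dimension at least $k+\delta$. $B_q(n,k,\delta;\alpha)$ denotes the maximum size of an $\alpha$-$(n,k,\delta)_q^c$ code. The implied constants in $\Theta(\cdot)$ may depend on $q,k,\delta,\alpha$ but not on $n$. *)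

theory Defs
  imports Complex_Main "HOL-Library.Function_Algebras" "HOL-Library.Landau_Symbols" "HOL-Library.Cardinality"
begin

text \<open>Vectors of F_q^n are represented as functions nat => 'a vanishing outside {..<n};
  the field F_q is a finite field type 'a with q = CARD('a).\<close>

definition fscale :: "'a::field \<Rightarrow> (nat \<Rightarrow> 'a) \<Rightarrow> nat \<Rightarrow> 'a" where
  "fscale c v = (\<lambda>i. c * v i)"

lemma vector_space_fscale: "vector_space (fscale :: 'a::field \<Rightarrow> _)"
  by unfold_locales (auto simp: fscale_def algebra_simps)

definition Fqn :: "nat \<Rightarrow> (nat \<Rightarrow> 'a::field) set" where
  "Fqn n = {v. \<forall>i\<ge>n. v i = 0}"

definition grass :: "nat \<Rightarrow> nat \<Rightarrow> (nat \<Rightarrow> 'a::field) set set" where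
  "grass n k = {U. module.subspace fscale U \<and> U \<subseteq> Fqn n \<and> vector_space.dim fscale U = k}"

definition covering_code :: "nat \<Rightarrow> nat \<Rightarrow> nat \<Rightarrow> nat \<Rightarrow> (nat \<Rightarrow> 'a::field) set set \<Rightarrow> bool" where
  "covering_code n k \<delta> \<alpha> C \<longleftrightarrow> C \<subseteq> grass n k \<and>
     (\<forall>S \<subseteq> C. card S = \<alpha> \<longrightarrow> vector_space.dim fscale (module.span fscale (\<Union>S)) \<ge> k + \<delta>)"

definition Bq :: "'a::{finite,field} itself \<Rightarrow> nat \<Rightarrow> nat \<Rightarrow> nat \<Rightarrow> nat \<Rightarrow> nat" where
  "Bq _ n k \<delta> \<alpha> = Max (card ` {C :: (nat \<Rightarrow> 'a) set set. covering_code n k \<delta> \<alpha> C})"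

end

theory Submission
  imports Defs "HOL-Library.FuncSet"
begin

text \<open>
  Write \<open>\<delta> - 1 = (\<alpha> - 1) t\<close>, so that the exponent is \<open>k - t\<close>.

  Upper bound: fix an ordered basis of every codeword and sort the codewords by their first \<open>k - t\<close>
  basis vectors. Any \<open>\<alpha>\<close> codewords with the same prefix are spanned by \<open>(k - t) + \<alpha> t = k + \<delta> - 1\<close>
  vectors, so each class has at most \<open>\<alpha> - 1\<close> members, and there are at most \<open>q^(n (k - t))\<close> classes.

  Lower bound: the deletion method. An \<open>\<alpha>\<close>-set of \<open>k\<close>-spaces spanning fewer than \<open>k + \<delta>\<close>
  dimensions consists of \<open>k\<close>-subspaces of the span of \<open>k + \<delta> - 1\<close> vectors, so there are only
  \<open>O(q^(n (k + \<delta> - 1)))\<close> such degenerate sets, while the Grassmannian has at least \<open>q^(k (n - k))\<close>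
  elements. Some \<open>s\<close>-subset of the Grassmannian, \<open>s \<approx> |G| / q^(n t)\<close>, contains at most \<open>s / 2\<close>
  degenerate sets; deleting one element of each leaves a code of size \<open>\<Omega>(q^(n (k - t)))\<close>.
\<close>

section \<open>Counting\<close>

lemma card_vanishing_outside:
  assumes "finite A"
  shows "card {v :: 'b \<Rightarrow> 'a::{finite,zero}. \<forall>i. i \<notin> A \<longrightarrow> v i = 0} = CARD('a) ^ card A"
proof -
  have "bij_betw (\<lambda>v. restrict v A) {v :: 'b \<Rightarrow> 'a. \<forall>i. i \<notin> A \<longrightarrow> v i = 0} (PiE A (\<lambda>_. UNIV))"
    by (rule bij_betw_byWitness[where f'="\<lambda>f i. if i \<in> A then f i else 0"])
      (auto simp: fun_eq_iff PiE_def extensional_def)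
  then show ?thesis
    using assms by (simp add: bij_betw_same_card card_PiE)
qed

lemma card_le_mult_fibre_bound:
  assumes "finite L" "f ` C \<subseteq> L" "\<And>y. y \<in> L \<Longrightarrow> card {x \<in> C. f x = y} \<le> b"
  shows "card C \<le> card L * b"
proof -
  have "C = (\<Union>y\<in>L. {x \<in> C. f x = y})"
    using assms(2) by auto
  then have "card C \<le> (\<Sum>y\<in>L. card {x \<in> C. f x = y})"
    by (metis card_UN_le[OF assms(1)])
  also have "\<dots> \<le> (\<Sum>y\<in>L. b)"
    using assms(3) by (rule sum_mono)
  finally show ?thesis
    by simp
qed

lemma exists_le_average:
  fixes f :: "'b \<Rightarrow> nat"
  assumes "finite A" "A \<noteq> {}"
  shows "\<exists>x\<in>A. f x * card A \<le> sum f A"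
proof (rule ccontr)
  assume "\<not> ?thesis"
  then have "(\<Sum>x\<in>A. sum f A) < (\<Sum>x\<in>A. f x * card A)"
    using assms by (intro sum_strict_mono) auto
  moreover have "(\<Sum>x\<in>A. f x * card A) = (\<Sum>x\<in>A. sum f A)"
    by (simp add: sum_distrib_left mult.commute)
  ultimately show False
    by simp
qed

lemma card_supersets:
  assumes "finite V" "T \<subseteq> V" "card T \<le> s"
  shows "card {F. F \<subseteq> V \<and> card F = s \<and> T \<subseteq> F} = (card V - card T) choose (s - card T)"
proof -
  have fin: "finite T" "\<And>F. F \<subseteq> V \<Longrightarrow> finite F"
    using assms finite_subset by blast+
  have "bij_betw (\<lambda>F. F - T) {F. F \<subseteq> V \<and> card F = s \<and> T \<subseteq> F}
                              {G. G \<subseteq> V - T \<and> card G = s - card T}"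
  proof (rule bij_betw_byWitness[where f'="\<lambda>G. G \<union> T"])
    show "(\<lambda>F. F - T) ` {F. F \<subseteq> V \<and> card F = s \<and> T \<subseteq> F} \<subseteq> {G. G \<subseteq> V - T \<and> card G = s - card T}"
    proof
      fix G assume "G \<in> (\<lambda>F. F - T) ` {F. F \<subseteq> V \<and> card F = s \<and> T \<subseteq> F}"
      then obtain F where "F \<subseteq> V" "card F = s" "T \<subseteq> F" "G = F - T"
        by auto
      then show "G \<in> {G. G \<subseteq> V - T \<and> card G = s - card T}"
        using fin by (auto simp: card_Diff_subset)
    qed
    show "(\<lambda>G. G \<union> T) ` {G. G \<subseteq> V - T \<and> card G = s - card T} \<subseteq> {F. F \<subseteq> V \<and> card F = s \<and> T \<subseteq> F}"
    proof
      fix F assume "F \<in> (\<lambda>G. G \<union> T) ` {G. G \<subseteq> V - T \<and> card G = s - card T}"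
      then obtain G where G: "G \<subseteq> V - T" "card G = s - card T" "F = G \<union> T"
        by auto
      moreover have "card (G \<union> T) = card G + card T"
        using fin G by (intro card_Un_disjoint) auto
      ultimately show "F \<in> {F. F \<subseteq> V \<and> card F = s \<and> T \<subseteq> F}"
        using assms(2,3) by auto
    qed
  qed auto
  then have "card {F. F \<subseteq> V \<and> card F = s \<and> T \<subseteq> F} = card (V - T) choose (s - card T)"
    using assms(1) by (simp add: bij_betw_same_card n_subsets)
  then show ?thesis
    using assms fin by (simp add: card_Diff_subset)
qed

lemma binomial_diff_mult_power_le:
  "a \<le> s \<Longrightarrow> s \<le> m \<Longrightarrow> ((m - a) choose (s - a)) * m ^ a \<le> (m choose s) * s ^ a"
proof (induction a arbitrary: m s)
  case 0
  then show ?case by simp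
next
  case (Suc a)
  obtain s' m' where sm: "s = Suc s'" "m = Suc m'" "a \<le> s'" "s' \<le> m'"
    using Suc.prems by (cases s; cases m) auto
  define X where "X = (m' - a) choose (s' - a)"
  define B where "B = m' choose s'"
  have IH: "X * m' ^ a \<le> B * s' ^ a"
    unfolding X_def B_def by (rule Suc.IH[OF sm(3,4)])
  have pow: "(s' * Suc m') ^ a \<le> (Suc s' * m') ^ a"
    using sm by (intro power_mono) auto
  have "(X * Suc m' ^ a) * m' ^ a = (X * m' ^ a) * Suc m' ^ a"
    by (simp add: ac_simps)
  also have "\<dots> \<le> (B * s' ^ a) * Suc m' ^ a"
    using IH by simp
  also have "\<dots> = B * (s' * Suc m') ^ a"
    by (simp only: power_mult_distrib mult.assoc)
  also have "\<dots> \<le> B * (Suc s' * m') ^ a"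
    using pow by simp
  also have "\<dots> = (B * Suc s' ^ a) * m' ^ a"
    by (simp only: power_mult_distrib mult.assoc)
  finally have "(X * Suc m' ^ a) * m' ^ a \<le> (B * Suc s' ^ a) * m' ^ a" .
  moreover have "0 < m' ^ a"
    using sm by (cases "m' = 0") auto
  ultimately have "X * Suc m' ^ a \<le> B * Suc s' ^ a"
    by (metis mult_le_cancel2)
  then have "Suc m' * (X * Suc m' ^ a) \<le> (Suc m' * B) * Suc s' ^ a"
    using mult_le_mono2 by (simp only: mult.assoc)
  moreover have "Suc m' * B = (Suc m' choose Suc s') * Suc s'"
    unfolding B_def by (rule Suc_times_binomial_eq)
  moreover have "((m - Suc a) choose (s - Suc a)) * m ^ Suc a = Suc m' * (X * Suc m' ^ a)"
    unfolding sm X_def by (simp add: algebra_simps)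
  ultimately show ?case
    unfolding sm power_Suc by (simp only: mult.assoc)
qed

lemma sum_card_contained_eq:
  assumes "finite V" "\<forall>T\<in>Bad. T \<subseteq> V \<and> card T = a" "a \<le> s"
  shows "(\<Sum>F\<in>{F. F \<subseteq> V \<and> card F = s}. card {T\<in>Bad. T \<subseteq> F})
           = card Bad * ((card V - a) choose (s - a))"
proof -
  define Sub where "Sub = {F. F \<subseteq> V \<and> card F = s}"
  have "finite Bad"
    using assms(1,2) by (meson PowI finite_Pow_iff finite_subset subsetI)
  have "finite Sub"
    using assms(1) by (simp add: Sub_def)
  have "(\<Sum>F\<in>Sub. card {T\<in>Bad. T \<subseteq> F}) = (\<Sum>F\<in>Sub. \<Sum>T\<in>Bad. if T \<subseteq> F then 1 else 0)"
    using \<open>finite Bad\<close> by (simp add: sum.If_cases Int_def)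
  also have "\<dots> = (\<Sum>T\<in>Bad. \<Sum>F\<in>Sub. if T \<subseteq> F then 1 else 0)"
    by (rule sum.swap)
  also have "\<dots> = (\<Sum>T\<in>Bad. card {F\<in>Sub. T \<subseteq> F})"
    using \<open>finite Sub\<close> by (simp add: sum.If_cases Int_def)
  also have "\<dots> = (\<Sum>T\<in>Bad. (card V - a) choose (s - a))"
  proof (rule sum.cong[OF refl])
    fix T assume "T \<in> Bad"
    then have "{F\<in>Sub. T \<subseteq> F} = {F. F \<subseteq> V \<and> card F = s \<and> T \<subseteq> F}" "T \<subseteq> V" "card T = a"
      using assms(2) by (auto simp: Sub_def)
    then show "card {F\<in>Sub. T \<subseteq> F} = (card V - a) choose (s - a)"
      using card_supersets[OF assms(1), of T s] assms(3) by simp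
  qed
  finally show ?thesis
    by (simp add: Sub_def)
qed

lemma exists_subset_containing_few:
  assumes "finite V" "\<forall>T\<in>Bad. T \<subseteq> V \<and> card T = a" "a \<le> s" "s \<le> card V"
  shows "\<exists>F\<subseteq>V. card F = s \<and> card {T\<in>Bad. T \<subseteq> F} * card V ^ a \<le> card Bad * s ^ a"
proof -
  define Sub where "Sub = {F. F \<subseteq> V \<and> card F = s}"
  have Sub: "finite Sub" "card Sub = card V choose s"
    using assms(1) by (simp_all add: Sub_def n_subsets)
  then have "Sub \<noteq> {}"
    using assms(4) by auto
  obtain F where F: "F \<in> Sub"
    "card {T\<in>Bad. T \<subseteq> F} * card Sub \<le> card Bad * ((card V - a) choose (s - a))"
    using exists_le_average[OF Sub(1) \<open>Sub \<noteq> {}\<close>, where f="\<lambda>F. card {T\<in>Bad. T \<subseteq> F}"]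
      sum_card_contained_eq[OF assms(1-3)] by (auto simp: Sub_def)
  have "card Sub * (card {T\<in>Bad. T \<subseteq> F} * card V ^ a)
      \<le> card Bad * (((card V - a) choose (s - a)) * card V ^ a)"
    using mult_right_mono[OF F(2), of "card V ^ a"] by (simp add: ac_simps)
  also have "\<dots> \<le> card Bad * ((card V choose s) * s ^ a)"
    using binomial_diff_mult_power_le[OF assms(3,4)] by simp
  finally have "card Sub * (card {T\<in>Bad. T \<subseteq> F} * card V ^ a) \<le> card Sub * (card Bad * s ^ a)"
    by (simp add: Sub(2) ac_simps)
  then show ?thesis
    using F(1) \<open>Sub \<noteq> {}\<close> Sub(1) by (auto simp: Sub_def)
qed

lemma exists_subset_avoiding:
  assumes "finite F" "{} \<notin> Bad"
  shows "\<exists>F'\<subseteq>F. card F \<le> card F' + card {T\<in>Bad. T \<subseteq> F} \<and> (\<forall>T\<in>Bad. \<not> T \<subseteq> F')"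
proof -
  define D where "D = (\<lambda>T. SOME x. x \<in> T) ` {T\<in>Bad. T \<subseteq> F}"
  have "finite {T\<in>Bad. T \<subseteq> F}"
    using assms(1) by (rule finite_subset[rotated, OF finite_Pow_iff[THEN iffD2]]) auto
  then have "finite D" "card D \<le> card {T\<in>Bad. T \<subseteq> F}"
    unfolding D_def by (auto intro: card_image_le)
  moreover have "card F - card D \<le> card (F - D)"
    using \<open>finite D\<close> by (rule diff_card_le_card_Diff)
  moreover have "\<not> T \<subseteq> F - D" if "T \<in> Bad" for T
  proof
    assume "T \<subseteq> F - D"
    moreover have "(SOME x. x \<in> T) \<in> T"
      using that assms(2) by (metis ex_in_conv someI_ex)
    ultimately show False
      using that by (auto simp: D_def)
  qed
  ultimately show ?thesis
    by (intro exI[of _ "F - D"]) auto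
qed

lemma deletion_method:
  assumes "finite V" "\<forall>T\<in>Bad. T \<subseteq> V \<and> card T = a" "1 \<le> a" "a \<le> s" "s \<le> card V"
    and "2 * card Bad * s ^ a \<le> s * card V ^ a"
  shows "\<exists>F\<subseteq>V. s \<le> 2 * card F \<and> (\<forall>T\<in>Bad. \<not> T \<subseteq> F)"
proof -
  obtain F where F: "F \<subseteq> V" "card F = s"
    and few: "card {T\<in>Bad. T \<subseteq> F} * card V ^ a \<le> card Bad * s ^ a"
    using exists_subset_containing_few[OF assms(1,2,4,5)] by blast
  have "2 * card {T\<in>Bad. T \<subseteq> F} * card V ^ a \<le> s * card V ^ a"
    using mult_le_mono2[OF few, of 2] assms(6) by (metis mult.assoc order_trans)
  moreover have "0 < card V ^ a"
    using assms(3-5) by simp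
  ultimately have "2 * card {T\<in>Bad. T \<subseteq> F} \<le> s"
    by (metis mult_le_cancel2)
  moreover obtain F' where "F' \<subseteq> F" "card F \<le> card F' + card {T\<in>Bad. T \<subseteq> F}"
    "\<forall>T\<in>Bad. \<not> T \<subseteq> F'"
    using exists_subset_avoiding[of F Bad] F assms(1-3) finite_subset by force
  ultimately show ?thesis
    using F by (intro exI[of _ F']) auto
qed

lemma deletion_condition_for_small_sample:
  fixes B m c Q s :: nat
  assumes "2 \<le> a" "0 < c" "2 * B \<le> c * m * Q ^ (a - 1)" "s * (c * Q) \<le> m"
  shows "2 * B * s ^ a \<le> s * m ^ a"
proof -
  have "2 * B * s ^ a = 2 * B * s ^ (a - 1) * s"
    using assms(1) by (simp add: power_eq_if)
  also have "\<dots> \<le> c * m * Q ^ (a - 1) * s ^ (a - 1) * s"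
    using assms(3) by (intro mult_right_mono) auto
  also have "\<dots> = m * (c * (s * Q) ^ (a - 1)) * s"
    by (simp add: power_mult_distrib ac_simps)
  also have "\<dots> \<le> m * (c ^ (a - 1) * (s * Q) ^ (a - 1)) * s"
    using assms(1,2) by (intro mult_right_mono mult_left_mono) (auto intro: self_le_power)
  also have "\<dots> = m * (s * (c * Q)) ^ (a - 1) * s"
    by (simp add: power_mult_distrib ac_simps)
  also have "\<dots> \<le> m * m ^ (a - 1) * s"
    using assms(4) by (intro mult_right_mono mult_left_mono power_mono) auto
  also have "\<dots> = s * m ^ a"
    using assms(1) by (simp add: power_eq_if)
  finally show ?thesis .
qed

section \<open>Spans over a finite field\<close>

context module
begin

lemma span_eq_image_PiE:
  assumes "finite S"
  shows "span S = (\<lambda>u. \<Sum>v\<in>S. u v *s v) ` PiE S (\<lambda>_. UNIV)"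
  unfolding span_finite[OF assms]
proof (intro equalityI subsetI)
  fix x assume "x \<in> range (\<lambda>u. \<Sum>v\<in>S. u v *s v)"
  then obtain u where "x = (\<Sum>v\<in>S. u v *s v)"
    by blast
  also have "\<dots> = (\<Sum>v\<in>S. restrict u S v *s v)"
    by (rule sum.cong) auto
  finally have "x = (\<Sum>v\<in>S. restrict u S v *s v)" .
  moreover have "restrict u S \<in> PiE S (\<lambda>_. UNIV)"
    by simp
  ultimately show "x \<in> (\<lambda>u. \<Sum>v\<in>S. u v *s v) ` PiE S (\<lambda>_. UNIV)"
    by (rule image_eqI)
qed blast

lemma finite_span_finite_scalars:
  assumes "finite (UNIV :: 'a set)" "finite S"
  shows "finite (span S)"
  unfolding span_eq_image_PiE[OF assms(2)] using assms by (simp add: finite_PiE)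

lemma card_span_le:
  assumes "finite (UNIV :: 'a set)" "finite S"
  shows "card (span S) \<le> CARD('a) ^ card S"
proof -
  have "card (span S) \<le> card (PiE S (\<lambda>_. UNIV :: 'a set))"
    unfolding span_eq_image_PiE[OF assms(2)] by (rule card_image_le) (simp add: assms finite_PiE)
  then show ?thesis
    using assms(2) by (simp add: card_PiE)
qed

end

lemma (in vector_space) dim_span_Union_le:
  assumes "finite S" "finite P"
    and "\<And>U. U \<in> S \<Longrightarrow> U \<subseteq> span (P \<union> R U)" "\<And>U. U \<in> S \<Longrightarrow> finite (R U)"
    and "\<And>U. U \<in> S \<Longrightarrow> card (R U) \<le> r"
  shows "dim (span (\<Union>S)) \<le> card P + card S * r"
proof -
  have "U \<subseteq> span (P \<union> (\<Union>U\<in>S. R U))" if "U \<in> S" for U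
    using assms(3)[OF that] span_mono[of "P \<union> R U" "P \<union> (\<Union>U\<in>S. R U)"] that by blast
  then have "\<Union>S \<subseteq> span (P \<union> (\<Union>U\<in>S. R U))"
    by (rule Union_least)
  then have "dim (\<Union>S) \<le> card (P \<union> (\<Union>U\<in>S. R U))"
    using assms(1,2,4) by (simp add: dim_le_card)
  also have "\<dots> \<le> card P + card (\<Union>U\<in>S. R U)"
    by (rule card_Un_le)
  also have "card (\<Union>U\<in>S. R U) \<le> (\<Sum>U\<in>S. card (R U))"
    using assms(1) by (rule card_UN_le)
  also have "\<dots> \<le> card S * r"
    using sum_mono[of S "\<lambda>U. card (R U)" "\<lambda>_. r"] assms(5) by simp
  finally show ?thesis
    by simp
qed

section \<open>The coordinate space and the Grassmannian\<close>

interpretation V: vector_space "fscale :: 'a::field \<Rightarrow> (nat \<Rightarrow> 'a) \<Rightarrow> nat \<Rightarrow> 'a"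
  by (rule vector_space_fscale)

lemma fscale_apply [simp]: "fscale c v i = c * v i"
  by (simp add: fscale_def)

lemma sum_fun_apply: "sum f S i = (\<Sum>v\<in>S. f v i)"
  for f :: "'b \<Rightarrow> nat \<Rightarrow> 'a::comm_monoid_add"
  by (induction S rule: infinite_finite_induct) auto

lemma subspace_Fqn: "V.subspace (Fqn n)"
  unfolding V.subspace_def Fqn_def by auto

lemma span_subset_Fqn: "S \<subseteq> Fqn n \<Longrightarrow> V.span S \<subseteq> Fqn n"
  using V.span_minimal subspace_Fqn by blast

lemma card_Fqn: "card (Fqn n :: (nat \<Rightarrow> 'a::{finite,field}) set) = CARD('a) ^ n"
proof -
  have "Fqn n = {v :: nat \<Rightarrow> 'a. \<forall>i. i \<notin> {..<n} \<longrightarrow> v i = 0}"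
    by (auto simp: Fqn_def)
  then show ?thesis
    using card_vanishing_outside[of "{..<n}", where 'a='a] by simp
qed

lemma finite_Fqn: "finite (Fqn n :: (nat \<Rightarrow> 'a::{finite,field}) set)"
proof (rule card_ge_0_finite)
  show "0 < card (Fqn n :: (nat \<Rightarrow> 'a) set)"
    unfolding card_Fqn by (simp add: finite_UNIV_card_ge_0)
qed

lemma finite_grass: "finite (grass n k :: (nat \<Rightarrow> 'a::{finite,field}) set set)"
proof -
  have "grass n k \<subseteq> Pow (Fqn n :: (nat \<Rightarrow> 'a) set)"
    by (auto simp: grass_def)
  then show ?thesis
    using finite_Fqn finite_Pow_iff finite_subset by metis
qed

lemma grass_span_list:
  assumes "U \<in> (grass n k :: (nat \<Rightarrow> 'a::{finite,field}) set set)"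
  shows "\<exists>xs. set xs \<subseteq> U \<and> length xs = k \<and> V.span (set xs) = U"
proof -
  obtain B where B: "B \<subseteq> U" "V.independent B" "U \<subseteq> V.span B" "card B = V.dim U"
    using V.basis_exists by blast
  have U: "V.subspace U" "U \<subseteq> Fqn n" "V.dim U = k"
    using assms by (auto simp: grass_def)
  then have "finite B"
    using B(1) finite_Fqn finite_subset by metis
  then obtain xs where xs: "set xs = B" "distinct xs"
    using finite_distinct_list by blast
  have "V.span B \<subseteq> U"
    using B(1) U(1) by (rule V.span_minimal)
  moreover have "length xs = k"
    using xs B(4) U(3) distinct_card by metis
  ultimately show ?thesis
    using xs B(1,3) by (intro exI[of _ xs]) auto
qed

text \<open>
  A matrix \<open>M \<in> tail_matrices k n\<close> is the right block of a \<open>k \<times> n\<close> generator matrix \<open>[I\<^sub>k | M]\<close>,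
  whose rows are \<open>systematic_row M j\<close> for \<open>j < k\<close>.
\<close>

definition unit_vec :: "nat \<Rightarrow> nat \<Rightarrow> 'a::zero_neq_one" where
  "unit_vec j = (\<lambda>i. if i = j then 1 else 0)"

definition systematic_row :: "(nat \<Rightarrow> nat \<Rightarrow> 'a::field) \<Rightarrow> nat \<Rightarrow> nat \<Rightarrow> 'a" where
  "systematic_row M j = unit_vec j + M j"

definition tail_matrices :: "nat \<Rightarrow> nat \<Rightarrow> (nat \<Rightarrow> nat \<Rightarrow> 'a::zero) set" where
  "tail_matrices k n = PiE {..<k} (\<lambda>_. {v. \<forall>i. i \<notin> {k..<n} \<longrightarrow> v i = 0})"

definition row_space :: "(nat \<Rightarrow> nat \<Rightarrow> 'a::field) \<Rightarrow> nat \<Rightarrow> (nat \<Rightarrow> 'a) set" where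
  "row_space M k = V.span (systematic_row M ` {..<k})"

lemma systematic_row_coord:
  assumes "M \<in> tail_matrices k n" "j < k" "l < k"
  shows "systematic_row M j l = (if l = j then 1 else 0)"
  using PiE_mem[OF assms(1)[unfolded tail_matrices_def], of j] assms(2,3)
  by (auto simp: systematic_row_def unit_vec_def)

lemma inj_on_systematic_row:
  assumes "M \<in> tail_matrices k n"
  shows "inj_on (systematic_row M) {..<k}"
proof (rule inj_onI)
  fix j l assume "j \<in> {..<k}" "l \<in> {..<k}" "systematic_row M j = systematic_row M l"
  then show "j = l"
    using systematic_row_coord[OF assms, of _ j] by (metis lessThan_iff one_neq_zero)
qed

lemma coord_sum_systematic_rows:
  assumes "M \<in> tail_matrices k n" "l < k"
  shows "(\<Sum>j<k. fscale (c j) (systematic_row M j)) l = c l"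
proof -
  have "(\<Sum>j<k. fscale (c j) (systematic_row M j)) l = (\<Sum>j<k. if j = l then c j else 0)"
    unfolding sum_fun_apply using assms by (intro sum.cong) (auto simp: systematic_row_coord)
  then show ?thesis
    using assms(2) by simp
qed

lemma systematic_rows_independent:
  assumes "M \<in> tail_matrices k n"
  shows "V.independent (systematic_row M ` {..<k})"
proof (rule V.independent_if_scalars_zero)
  fix c x
  assume sum0: "(\<Sum>v\<in>systematic_row M ` {..<k}. fscale (c v) v) = 0"
    and "x \<in> systematic_row M ` {..<k}"
  then obtain l where l: "l < k" "x = systematic_row M l"
    by auto
  have "(\<Sum>j<k. fscale (c (systematic_row M j)) (systematic_row M j)) = 0"
    using sum0 by (simp add: sum.reindex[OF inj_on_systematic_row[OF assms]])
  then show "c x = 0"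
    using coord_sum_systematic_rows[OF assms l(1)] l by (metis zero_fun_apply)
qed simp

lemma row_space_repr:
  assumes "M \<in> tail_matrices k n" "x \<in> row_space M k"
  shows "x = (\<Sum>j<k. fscale (x j) (systematic_row M j))"
proof -
  obtain u where "x = (\<Sum>v\<in>systematic_row M ` {..<k}. fscale (u v) v)"
    using assms(2) V.span_finite[of "systematic_row M ` {..<k}"] by (auto simp: row_space_def)
  then have x: "x = (\<Sum>j<k. fscale (u (systematic_row M j)) (systematic_row M j))"
    by (simp add: sum.reindex[OF inj_on_systematic_row[OF assms(1)]])
  then have "x j = u (systematic_row M j)" if "j < k" for j
    using coord_sum_systematic_rows[OF assms(1) that] by metis
  then show ?thesis
    by (subst x) (auto intro: sum.cong)
qed

lemma row_space_in_grass:
  assumes "M \<in> tail_matrices k n" "k \<le> n"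
  shows "row_space M k \<in> grass n k"
proof -
  have "systematic_row M j \<in> Fqn n" if "j < k" for j
    using PiE_mem[OF assms(1)[unfolded tail_matrices_def], of j] that assms(2)
    by (auto simp: Fqn_def systematic_row_def unit_vec_def)
  then have "systematic_row M ` {..<k} \<subseteq> Fqn n"
    by auto
  then have "row_space M k \<subseteq> Fqn n"
    unfolding row_space_def by (rule span_subset_Fqn)
  moreover have "V.dim (row_space M k) = k"
    using V.dim_span_eq_card_independent[OF systematic_rows_independent[OF assms(1)]]
      card_image[OF inj_on_systematic_row[OF assms(1)]] by (simp add: row_space_def)
  ultimately show ?thesis
    by (simp add: grass_def row_space_def)
qed

lemma inj_on_row_space: "inj_on (\<lambda>M. row_space M k) (tail_matrices k n)"
proof (rule inj_onI)
  fix M M'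
  assume M: "M \<in> tail_matrices k n" "M' \<in> tail_matrices k n" "row_space M k = row_space M' k"
  have rows: "systematic_row M' j = systematic_row M j" if "j < k" for j
  proof -
    have "systematic_row M' j \<in> row_space M' k"
      unfolding row_space_def using that by (intro V.span_base imageI) simp
    then have mem: "systematic_row M' j \<in> row_space M k"
      using M(3) by simp
    have "systematic_row M' j = (\<Sum>l<k. fscale (systematic_row M' j l) (systematic_row M l))"
      using row_space_repr[OF M(1) mem] .
    also have "\<dots> = (\<Sum>l<k. if l = j then systematic_row M l else 0)"
      by (rule sum.cong) (simp_all add: systematic_row_coord[OF M(2) that])
    finally show ?thesis
      using that by simp
  qed
  show "M = M'"
  proof
    fix j
    show "M j = M' j"
    proof (cases "j < k")
      case True
      then show ?thesis
        using rows[OF True] by (simp add: systematic_row_def)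
    next
      case False
      then show ?thesis
        using PiE_arb[OF M(1)[unfolded tail_matrices_def]] PiE_arb[OF M(2)[unfolded tail_matrices_def]]
        by simp
    qed
  qed
qed

lemma card_grass_ge:
  assumes "k \<le> n"
  shows "CARD('a::{finite,field}) ^ (k * (n - k)) \<le> card (grass n k :: (nat \<Rightarrow> 'a) set set)"
proof -
  have "CARD('a) ^ (k * (n - k)) = (CARD('a) ^ (n - k)) ^ k"
    by (simp add: power_mult[symmetric] mult.commute)
  also have "\<dots> = card (tail_matrices k n :: (nat \<Rightarrow> nat \<Rightarrow> 'a) set)"
    using card_vanishing_outside[of "{k..<n}", where 'a='a] by (simp add: tail_matrices_def card_PiE)
  also have "\<dots> = card ((\<lambda>M. row_space M k) ` (tail_matrices k n :: (nat \<Rightarrow> nat \<Rightarrow> 'a) set))"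
    by (simp add: card_image[OF inj_on_row_space])
  also have "\<dots> \<le> card (grass n k :: (nat \<Rightarrow> 'a) set set)"
    using assms by (intro card_mono finite_grass) (auto intro: row_space_in_grass)
  finally show ?thesis .
qed

section \<open>The upper bound\<close>

lemma card_codewords_with_prefix_le:
  fixes C :: "(nat \<Rightarrow> 'a::{finite,field}) set set"
  assumes code: "covering_code n k \<delta> \<alpha> C" and "0 < \<alpha>" "(\<alpha> - 1) * t < \<delta>" "t \<le> k"
    and basis: "\<And>U. U \<in> C \<Longrightarrow> length (basis U) = k \<and> V.span (set (basis U)) = U"
  shows "card {U \<in> C. take (k - t) (basis U) = ys} \<le> \<alpha> - 1"
proof (rule ccontr)
  assume "\<not> ?thesis"
  then have "\<alpha> \<le> card {U \<in> C. take (k - t) (basis U) = ys}"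
    using assms(2) by linarith
  then obtain S where S: "S \<subseteq> {U \<in> C. take (k - t) (basis U) = ys}" "card S = \<alpha>" "finite S"
    by (rule obtain_subset_with_card_n)
  then obtain U0 where "U0 \<in> S"
    using assms(2) by (metis all_not_in_conv card.empty less_irrefl)
  then have "card (set ys) \<le> k - t"
    using S(1) card_length[of ys] by auto
  have "V.dim (V.span (\<Union>S)) \<le> card (set ys) + card S * t"
  proof (rule V.dim_span_Union_le[where R="\<lambda>U. set (drop (k - t) (basis U))"])
    fix U assume "U \<in> S"
    then have U: "U \<in> C" "take (k - t) (basis U) = ys"
      using S(1) by auto
    have "set (basis U) = set ys \<union> set (drop (k - t) (basis U))"
      using U(2) by (metis append_take_drop_id set_append)
    then show "U \<subseteq> V.span (set ys \<union> set (drop (k - t) (basis U)))"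
      using basis[OF U(1)] by simp
    show "card (set (drop (k - t) (basis U))) \<le> t"
      using basis[OF U(1)] card_length[of "drop (k - t) (basis U)"] assms(4) by simp
  qed (simp_all add: S(3))
  then have "V.dim (V.span (\<Union>S)) \<le> (k - t) + \<alpha> * t"
    using \<open>card (set ys) \<le> k - t\<close> S(2) by simp
  moreover have "k + \<delta> \<le> V.dim (V.span (\<Union>S))"
    using code S(1,2) by (auto simp: covering_code_def)
  moreover have "(k - t) + \<alpha> * t = k + (\<alpha> - 1) * t"
    using assms(2,4) by (simp add: diff_mult_distrib)
  ultimately show False
    using assms(3) by linarith
qed

lemma covering_code_card_le:
  fixes C :: "(nat \<Rightarrow> 'a::{finite,field}) set set"
  assumes "covering_code n k \<delta> \<alpha> C" and "0 < \<alpha>" "(\<alpha> - 1) * t < \<delta>" "t \<le> k"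
  shows "card C \<le> (\<alpha> - 1) * CARD('a) ^ ((k - t) * n)"
proof -
  have CG: "C \<subseteq> grass n k"
    using assms(1) by (simp add: covering_code_def)
  then have "\<forall>U\<in>C. \<exists>xs. set xs \<subseteq> U \<and> length xs = k \<and> V.span (set xs) = U"
    using grass_span_list by blast
  then obtain basis where basis: "\<And>U. U \<in> C \<Longrightarrow>
      set (basis U) \<subseteq> U \<and> length (basis U) = k \<and> V.span (set (basis U)) = U"
    by (metis bchoice)
  have "card C \<le> card {ys. set ys \<subseteq> (Fqn n :: (nat \<Rightarrow> 'a) set) \<and> length ys = k - t} * (\<alpha> - 1)"
  proof (rule card_le_mult_fibre_bound[where f="\<lambda>U. take (k - t) (basis U)"])
    show "finite {ys. set ys \<subseteq> (Fqn n :: (nat \<Rightarrow> 'a) set) \<and> length ys = k - t}"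
      using finite_Fqn by (rule finite_lists_length_eq)
    have "set (take (k - t) (basis U)) \<subseteq> Fqn n \<and> length (take (k - t) (basis U)) = k - t"
      if "U \<in> C" for U
      using basis[OF that] CG that set_take_subset[of "k - t" "basis U"] by (auto simp: grass_def)
    then show "(\<lambda>U. take (k - t) (basis U)) ` C \<subseteq> {ys. set ys \<subseteq> Fqn n \<and> length ys = k - t}"
      by blast
    show "card {U \<in> C. take (k - t) (basis U) = ys} \<le> \<alpha> - 1" for ys
      by (rule card_codewords_with_prefix_le[OF assms]) (use basis in blast)
  qed
  also have "card {ys. set ys \<subseteq> (Fqn n :: (nat \<Rightarrow> 'a) set) \<and> length ys = k - t}
      = CARD('a) ^ (n * (k - t))"
    by (simp add: card_lists_length_eq[OF finite_Fqn] card_Fqn power_mult)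
  finally show ?thesis
    by (simp add: mult.commute)
qed

section \<open>The lower bound\<close>

definition degenerate_sets :: "nat \<Rightarrow> nat \<Rightarrow> nat \<Rightarrow> nat \<Rightarrow> (nat \<Rightarrow> 'a::field) set set set" where
  "degenerate_sets n k \<delta> \<alpha> = {T. T \<subseteq> grass n k \<and> card T = \<alpha> \<and> V.dim (V.span (\<Union>T)) < k + \<delta>}"

lemma covering_code_iff_no_degenerate:
  "covering_code n k \<delta> \<alpha> C \<longleftrightarrow> C \<subseteq> grass n k \<and> (\<forall>T\<in>degenerate_sets n k \<delta> \<alpha>. \<not> T \<subseteq> C)"
  unfolding covering_code_def degenerate_sets_def by (auto simp: not_less) (metis not_less subset_trans)

definition spans_within :: "(nat \<Rightarrow> 'a::field) list \<Rightarrow> nat \<Rightarrow> (nat \<Rightarrow> 'a) set set" where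
  "spans_within ws k = (\<lambda>xs. V.span (set xs)) ` {xs. set xs \<subseteq> V.span (set ws) \<and> length xs = k}"

lemma finite_spans_within: "finite (spans_within (ws :: (nat \<Rightarrow> 'a::{finite,field}) list) k)"
  unfolding spans_within_def
  by (intro finite_imageI finite_lists_length_eq V.finite_span_finite_scalars) simp_all

lemma card_spans_within_le:
  "card (spans_within (ws :: (nat \<Rightarrow> 'a::{finite,field}) list) k) \<le> CARD('a) ^ (length ws * k)"
proof -
  have fin: "finite (V.span (set ws))"
    by (intro V.finite_span_finite_scalars) simp_all
  have "card (spans_within ws k) \<le> card {xs. set xs \<subseteq> V.span (set ws) \<and> length xs = k}"
    unfolding spans_within_def using fin by (intro card_image_le finite_lists_length_eq)
  also have "\<dots> = card (V.span (set ws)) ^ k"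
    using fin by (rule card_lists_length_eq)
  also have "\<dots> \<le> (CARD('a) ^ length ws) ^ k"
  proof (rule power_mono)
    have "card (V.span (set ws)) \<le> CARD('a) ^ card (set ws)"
      by (intro V.card_span_le) simp_all
    also have "\<dots> \<le> CARD('a) ^ length ws"
      using card_length[of ws] by (intro power_increasing) (simp_all add: Suc_le_eq)
    finally show "card (V.span (set ws)) \<le> CARD('a) ^ length ws" .
  qed simp
  finally show ?thesis
    by (simp add: power_mult)
qed

lemma degenerate_set_within_span:
  assumes "T \<in> (degenerate_sets n k \<delta> \<alpha> :: (nat \<Rightarrow> 'a::{finite,field}) set set set)"
  shows "\<exists>ws. set ws \<subseteq> Fqn n \<and> length ws = k + \<delta> - 1 \<and> T \<subseteq> spans_within ws k"
proof -
  have TG: "T \<subseteq> grass n k" and dim: "V.dim (\<Union>T) < k + \<delta>"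
    using assms by (auto simp: degenerate_sets_def)
  have TF: "\<Union>T \<subseteq> Fqn n"
    using TG by (auto simp: grass_def)
  obtain B where B: "B \<subseteq> \<Union>T" "\<Union>T \<subseteq> V.span B" "card B = V.dim (\<Union>T)"
    using V.basis_exists by blast
  have "finite B"
    using B(1) TF finite_Fqn finite_subset by metis
  then obtain xs where xs: "set xs = B" "distinct xs"
    using finite_distinct_list by blast
  define ws where "ws = xs @ replicate (k + \<delta> - 1 - length xs) 0"
  have "length xs \<le> k + \<delta> - 1"
    using xs B(3) dim distinct_card by fastforce
  then have "length ws = k + \<delta> - 1"
    by (simp add: ws_def)
  moreover have "set ws \<subseteq> Fqn n"
    using xs B(1) TF by (auto simp: ws_def Fqn_def)
  moreover have "U \<in> spans_within ws k" if "U \<in> T" for U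
  proof -
    obtain ys where ys: "set ys \<subseteq> U" "length ys = k" "V.span (set ys) = U"
      using grass_span_list TG \<open>U \<in> T\<close> by blast
    have "set ys \<subseteq> V.span B"
      using ys(1) B(2) that by blast
    also have "V.span B \<subseteq> V.span (set ws)"
      unfolding ws_def using xs(1) by (intro V.span_mono) auto
    finally show ?thesis
      unfolding spans_within_def using ys(2,3) by blast
  qed
  ultimately show ?thesis
    by blast
qed

lemma card_degenerate_sets_le:
  "card (degenerate_sets n k \<delta> \<alpha> :: (nat \<Rightarrow> 'a::{finite,field}) set set set)
     \<le> CARD('a) ^ (n * (k + \<delta> - 1)) * 2 ^ CARD('a) ^ ((k + \<delta> - 1) * k)"
proof -
  define d where "d = k + \<delta> - 1"
  define L where "L = {ws. set ws \<subseteq> (Fqn n :: (nat \<Rightarrow> 'a) set) \<and> length ws = d}"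
  have L: "finite L" "card L = CARD('a) ^ (n * d)"
    using finite_Fqn[where 'a='a]
    by (simp_all add: L_def finite_lists_length_eq card_lists_length_eq card_Fqn power_mult)
  have "degenerate_sets n k \<delta> \<alpha> \<subseteq> (\<Union>ws\<in>L. Pow (spans_within ws k))"
    using degenerate_set_within_span by (fastforce simp: L_def d_def)
  then have "card (degenerate_sets n k \<delta> \<alpha> :: (nat \<Rightarrow> 'a) set set set) \<le> card (\<Union>ws\<in>L. Pow (spans_within ws k))"
    by (rule card_mono[rotated]) (simp add: L(1) finite_spans_within)
  also have "\<dots> \<le> (\<Sum>ws\<in>L. card (Pow (spans_within ws k)))"
    using L(1) by (rule card_UN_le)
  also have "\<dots> \<le> (\<Sum>ws\<in>L. 2 ^ CARD('a) ^ (d * k))"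
  proof (rule sum_mono)
    fix ws assume "ws \<in> L"
    then show "card (Pow (spans_within ws k)) \<le> 2 ^ CARD('a) ^ (d * k)"
      using card_spans_within_le[of ws k]
      by (simp add: card_Pow finite_spans_within L_def)
  qed
  finally show ?thesis
    using L(2) by (simp add: d_def)
qed

lemma card_degenerate_sets_le_power:
  assumes "\<delta> \<le> (\<alpha> - 1) * t + 1"
  shows "card (degenerate_sets n k \<delta> \<alpha> :: (nat \<Rightarrow> 'a::{finite,field}) set set set)
     \<le> CARD('a) ^ (n * k) * (CARD('a) ^ (n * t)) ^ (\<alpha> - 1) * 2 ^ CARD('a) ^ ((k + \<delta> - 1) * k)"
proof -
  have "0 < CARD('a)"
    by (simp add: finite_UNIV_card_ge_0)
  have "k + \<delta> - 1 \<le> k + (\<alpha> - 1) * t"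
    using assms by linarith
  then have "n * (k + \<delta> - 1) \<le> n * (k + (\<alpha> - 1) * t)"
    by (rule mult_le_mono2)
  also have "\<dots> = n * k + n * t * (\<alpha> - 1)"
    by (simp add: distrib_left ac_simps)
  finally have "CARD('a) ^ (n * (k + \<delta> - 1)) \<le> CARD('a) ^ (n * k + n * t * (\<alpha> - 1))"
    using \<open>0 < CARD('a)\<close> by (intro power_increasing) simp_all
  also have "\<dots> = CARD('a) ^ (n * k) * (CARD('a) ^ (n * t)) ^ (\<alpha> - 1)"
    by (simp add: power_add power_mult)
  finally show ?thesis
    using card_degenerate_sets_le[of n k \<delta> \<alpha>, where 'a='a] mult_le_mono1 by (meson le_trans)
qed

lemma covering_code_of_size:
  assumes "2 \<le> \<alpha>" "\<alpha> \<le> s" "s \<le> card (grass n k :: (nat \<Rightarrow> 'a::{finite,field}) set set)"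
    and "2 * card (degenerate_sets n k \<delta> \<alpha> :: (nat \<Rightarrow> 'a) set set set) * s ^ \<alpha>
           \<le> s * card (grass n k :: (nat \<Rightarrow> 'a) set set) ^ \<alpha>"
  shows "\<exists>C :: (nat \<Rightarrow> 'a) set set. covering_code n k \<delta> \<alpha> C \<and> s \<le> 2 * card C"
proof -
  have "\<forall>T\<in>degenerate_sets n k \<delta> \<alpha>. T \<subseteq> (grass n k :: (nat \<Rightarrow> 'a) set set) \<and> card T = \<alpha>"
    by (simp add: degenerate_sets_def)
  moreover have "1 \<le> \<alpha>"
    using assms(1) by simp
  ultimately obtain C where "C \<subseteq> grass n k" "s \<le> 2 * card C"
    "\<forall>T\<in>degenerate_sets n k \<delta> \<alpha>. \<not> T \<subseteq> (C :: (nat \<Rightarrow> 'a) set set)"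
    using deletion_method[OF finite_grass _ _ assms(2-4)] by blast
  then show ?thesis
    by (auto simp: covering_code_iff_no_degenerate)
qed

lemma covering_code_singleton:
  fixes U :: "(nat \<Rightarrow> 'a::field) set"
  assumes "U \<in> grass n k" "2 \<le> \<alpha>"
  shows "covering_code n k \<delta> \<alpha> {U}"
proof -
  have "\<not> S \<subseteq> {U}" if "card S = \<alpha>" for S
  proof
    assume "S \<subseteq> {U}"
    then have "card S \<le> 1"
      using card_mono[of "{U}" S] by simp
    then show False
      using that assms(2) by simp
  qed
  then show ?thesis
    using assms(1) by (auto simp: covering_code_def)
qed

lemma exists_covering_code_card_ge:
  assumes "2 \<le> \<alpha>" "0 < card (grass n k :: (nat \<Rightarrow> 'a::{finite,field}) set set)"
    and "s \<le> card (grass n k :: (nat \<Rightarrow> 'a) set set)"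
    and "2 * card (degenerate_sets n k \<delta> \<alpha> :: (nat \<Rightarrow> 'a) set set set) * s ^ \<alpha>
           \<le> s * card (grass n k :: (nat \<Rightarrow> 'a) set set) ^ \<alpha>"
  shows "\<exists>C :: (nat \<Rightarrow> 'a) set set. covering_code n k \<delta> \<alpha> C \<and> s + 1 \<le> (\<alpha> + 4) * card C"
proof (cases "\<alpha> \<le> s")
  case True
  then obtain C :: "(nat \<Rightarrow> 'a) set set" where C: "covering_code n k \<delta> \<alpha> C" "s \<le> 2 * card C"
    using covering_code_of_size[OF assms(1) True assms(3,4)] by blast
  have "s + 1 \<le> 4 * card C"
    using C(2) True assms(1) by linarith
  also have "\<dots> \<le> (\<alpha> + 4) * card C"
    by simp
  finally show ?thesis
    using C(1) by blast
next
  case False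
  obtain U :: "(nat \<Rightarrow> 'a) set" where "U \<in> grass n k"
    using assms(2) by (metis card_gt_0_iff ex_in_conv)
  then have "covering_code n k \<delta> \<alpha> {U}"
    using assms(1) by (rule covering_code_singleton)
  moreover have "s + 1 \<le> (\<alpha> + 4) * card {U}"
    using False by simp
  ultimately show ?thesis
    by blast
qed

lemma less_succ_div_mult:
  fixes x Q m G c :: nat
  assumes "x * Q \<le> m * G" "0 < c * Q" "0 < G"
  shows "x < (m div (c * Q) + 1) * (c * G)"
proof -
  define s where "s = m div (c * Q)"
  have "m = s * (c * Q) + m mod (c * Q)"
    unfolding s_def by (rule div_mult_mod_eq[symmetric])
  moreover have "m mod (c * Q) < c * Q"
    using assms(2) by simp
  ultimately have "m < (s + 1) * (c * Q)"
    by (simp add: algebra_simps)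
  then have "m * G < ((s + 1) * (c * Q)) * G"
    using assms(3) by simp
  also have "\<dots> = ((s + 1) * (c * G)) * Q"
    by (simp only: ac_simps)
  finally have "m * G < ((s + 1) * (c * G)) * Q" .
  with assms(1) have "x * Q < ((s + 1) * (c * G)) * Q"
    by (rule order_le_less_trans)
  then show ?thesis
    unfolding s_def by simp
qed

lemma exists_large_covering_code:
  assumes "2 \<le> \<alpha>" "\<delta> \<le> (\<alpha> - 1) * t + 1" "t \<le> k" "k \<le> n"
  defines "K \<equiv> 2 ^ CARD('a::{finite,field}) ^ ((k + \<delta> - 1) * k)" and "G \<equiv> CARD('a) ^ (k * k)"
  shows "\<exists>C :: (nat \<Rightarrow> 'a) set set. covering_code n k \<delta> \<alpha> C \<and>
           CARD('a) ^ ((k - t) * n) \<le> (\<alpha> + 4) * (2 * K * G * G) * card C"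
proof -
  define q where "q = CARD('a)"
  define c where "c = 2 * K * G"
  define m where "m = card (grass n k :: (nat \<Rightarrow> 'a) set set)"
  define Q where "Q = q ^ (n * t)"
  \<comment> \<open>With this sample size the deletion method removes at most half of the sample.\<close>
  define s where "s = m div (c * Q)"
  have "0 < q"
    by (simp add: q_def finite_UNIV_card_ge_0)
  then have pos: "0 < G" "0 < c" "0 < Q"
    by (simp_all add: G_def K_def c_def Q_def q_def)
  have "q ^ (n * k) = q ^ (k * (n - k)) * G"
    using assms(4) by (simp add: G_def q_def power_add[symmetric] diff_mult_distrib2 algebra_simps)
  also have "\<dots> \<le> m * G"
    using card_grass_ge[OF assms(4), where 'a='a] by (simp add: m_def q_def)
  finally have grass_big: "q ^ (n * k) \<le> m * G" .
  have "0 < q ^ (k * (n - k))"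
    using \<open>0 < q\<close> by simp
  then have "0 < m"
    using card_grass_ge[OF assms(4), where 'a='a] unfolding m_def q_def by linarith
  have "q ^ ((k - t) * n) * Q = q ^ (n * k)"
    using assms(3) by (simp add: Q_def power_add[symmetric] diff_mult_distrib algebra_simps)
  then have "q ^ ((k - t) * n) * Q \<le> m * G"
    using grass_big by simp
  then have X: "q ^ ((k - t) * n) < (s + 1) * (c * G)"
    unfolding s_def using pos by (intro less_succ_div_mult) simp_all
  have "card (degenerate_sets n k \<delta> \<alpha> :: (nat \<Rightarrow> 'a) set set set) \<le> q ^ (n * k) * Q ^ (\<alpha> - 1) * K"
    using card_degenerate_sets_le_power[OF assms(2)] by (simp add: q_def Q_def K_def)
  also have "\<dots> \<le> m * G * Q ^ (\<alpha> - 1) * K"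
    using grass_big by (intro mult_le_mono1)
  finally have "2 * card (degenerate_sets n k \<delta> \<alpha> :: (nat \<Rightarrow> 'a) set set set) \<le> c * m * Q ^ (\<alpha> - 1)"
    using mult_le_mono2[of _ _ 2] by (simp add: c_def ac_simps)
  then have "2 * card (degenerate_sets n k \<delta> \<alpha> :: (nat \<Rightarrow> 'a) set set set) * s ^ \<alpha> \<le> s * m ^ \<alpha>"
    using assms(1) pos(2) div_times_less_eq_dividend[of m "c * Q"]
    by (intro deletion_condition_for_small_sample) (simp_all only: s_def)
  moreover have "s \<le> m"
    unfolding s_def by (rule div_le_dividend)
  ultimately obtain C :: "(nat \<Rightarrow> 'a) set set"
    where C: "covering_code n k \<delta> \<alpha> C" "s + 1 \<le> (\<alpha> + 4) * card C"
    using exists_covering_code_card_ge[OF assms(1)] \<open>0 < m\<close> unfolding m_def by blast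
  have "(s + 1) * (c * G) \<le> ((\<alpha> + 4) * card C) * (c * G)"
    using C(2) by (rule mult_le_mono1)
  also have "\<dots> = (\<alpha> + 4) * (2 * K * G * G) * card C"
    by (simp add: c_def ac_simps)
  finally have "q ^ ((k - t) * n) \<le> (\<alpha> + 4) * (2 * K * G * G) * card C"
    using X by simp
  with C(1) show ?thesis
    unfolding q_def by blast
qed

lemma covering_code_lower_bound:
  assumes "2 \<le> \<alpha>" "\<delta> \<le> (\<alpha> - 1) * t + 1" "t \<le> k"
  obtains D where "0 < D"
    and "\<And>n. k \<le> n \<Longrightarrow> \<exists>C :: (nat \<Rightarrow> 'a::{finite,field}) set set.
           covering_code n k \<delta> \<alpha> C \<and> CARD('a) ^ ((k - t) * n) \<le> D * card C"
proof
  show "0 < (\<alpha> + 4) * (2 * 2 ^ CARD('a) ^ ((k + \<delta> - 1) * k) * CARD('a) ^ (k * k) * CARD('a) ^ (k * k))"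
    by (simp add: finite_UNIV_card_ge_0)
qed (rule exists_large_covering_code[OF assms])

section \<open>Asymptotics of \<open>B\<^sub>q(n, k, \<delta>; \<alpha>)\<close>\<close>

lemma finite_covering_codes: "finite {C :: (nat \<Rightarrow> 'a::{finite,field}) set set. covering_code n k \<delta> \<alpha> C}"
proof -
  have "{C :: (nat \<Rightarrow> 'a) set set. covering_code n k \<delta> \<alpha> C} \<subseteq> Pow (grass n k)"
    by (auto simp: covering_code_def)
  then show ?thesis
    using finite_grass finite_Pow_iff finite_subset by metis
qed

lemma card_le_Bq:
  assumes "covering_code n k \<delta> \<alpha> (C :: (nat \<Rightarrow> 'a::{finite,field}) set set)"
  shows "card C \<le> Bq TYPE('a) n k \<delta> \<alpha>"
  unfolding Bq_def using assms by (intro Max_ge finite_imageI finite_covering_codes) auto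

lemma Bq_le:
  assumes "\<And>C :: (nat \<Rightarrow> 'a::{finite,field}) set set. covering_code n k \<delta> \<alpha> C \<Longrightarrow> card C \<le> b"
    and "0 < \<alpha>"
  shows "Bq TYPE('a) n k \<delta> \<alpha> \<le> b"
proof -
  have "covering_code n k \<delta> \<alpha> ({} :: (nat \<Rightarrow> 'a) set set)"
    using assms(2) by (auto simp: covering_code_def)
  then show ?thesis
    unfolding Bq_def using assms(1) finite_covering_codes[where 'a='a]
    by (subst Max_le_iff) auto
qed

lemma bigtheta_of_nat_bounds:
  fixes f g :: "nat \<Rightarrow> nat"
  assumes "0 < c" "eventually (\<lambda>n. g n \<le> c * f n) at_top" "\<And>n. f n \<le> C * g n"
  shows "(\<lambda>n. real (f n)) \<in> \<Theta>(\<lambda>n. real (g n))"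
proof (rule bigthetaI'[of "1 / real c" "real C + 1"])
  show "0 < 1 / real c" "0 < real C + 1"
    using assms(1) by simp_all
  show "\<forall>\<^sub>F n in at_top. 1 / real c * norm (real (g n)) \<le> norm (real (f n)) \<and>
                         norm (real (f n)) \<le> (real C + 1) * norm (real (g n))"
    using assms(2)
  proof eventually_elim
    case (elim n)
    have "real (g n) \<le> real c * real (f n)"
      using elim by (metis of_nat_le_iff of_nat_mult)
    then have "1 / real c * real (g n) \<le> real (f n)"
      using assms(1) by (simp add: field_simps)
    moreover have "real (f n) \<le> real C * real (g n)"
      using assms(3)[of n] by (metis of_nat_le_iff of_nat_mult)
    then have "real (f n) \<le> (real C + 1) * real (g n)"
      by (simp add: algebra_simps)
    ultimately show ?case
      by simp
  qed
qed

lemma power_eq_powr_covering_exponent: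
  assumes "0 < q" "\<delta> = (\<alpha> - 1) * t + 1" "2 \<le> \<alpha>" "t \<le> k"
  shows "real (q ^ ((k - t) * n)) = real q powr ((real k - (real \<delta> - 1) / (real \<alpha> - 1)) * real n)"
proof -
  have "(real \<delta> - 1) / (real \<alpha> - 1) = real t"
    using assms(2,3) by (simp add: of_nat_diff)
  then have "real q powr ((real k - (real \<delta> - 1) / (real \<alpha> - 1)) * real n) = real q powr real ((k - t) * n)"
    using assms(4) by (simp add: of_nat_diff)
  also have "\<dots> = real q ^ ((k - t) * n)"
    using assms(1) by (intro powr_realpow) simp
  finally show ?thesis
    by simp
qed

theorem mainTheorem15:
  fixes k \<delta> \<alpha> :: nat
  assumes "0 < k" and "0 < \<delta>" and "2 \<le> \<alpha>" and "\<delta> \<le> (\<alpha> - 1) * k"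
    and "(\<alpha> - 1) dvd (\<delta> - 1)"
  shows "(\<lambda>n. real (Bq TYPE('a::{finite,field}) n k \<delta> \<alpha>))
           \<in> \<Theta>(\<lambda>n. real CARD('a) powr ((real k - (real \<delta> - 1) / (real \<alpha> - 1)) * real n))"
proof -
  define t where "t = (\<delta> - 1) div (\<alpha> - 1)"
  have \<delta>_t: "\<delta> = (\<alpha> - 1) * t + 1"
    using assms(2,5) by (simp add: t_def)
  then have "(\<alpha> - 1) * t < (\<alpha> - 1) * k"
    using assms(4) by linarith
  then have "t < k"
    by simp
  obtain D where D: "0 < D" "\<And>n. k \<le> n \<Longrightarrow> \<exists>C :: (nat \<Rightarrow> 'a) set set.
      covering_code n k \<delta> \<alpha> C \<and> CARD('a) ^ ((k - t) * n) \<le> D * card C"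
    using covering_code_lower_bound[of \<alpha> \<delta> t k] assms(3) \<delta>_t \<open>t < k\<close> by auto
  have "(\<lambda>n. real (Bq TYPE('a) n k \<delta> \<alpha>)) \<in> \<Theta>(\<lambda>n. real (CARD('a) ^ ((k - t) * n)))"
  proof (rule bigtheta_of_nat_bounds[OF D(1)])
    show "\<forall>\<^sub>F n in at_top. CARD('a) ^ ((k - t) * n) \<le> D * Bq TYPE('a) n k \<delta> \<alpha>"
      using eventually_ge_at_top[of k]
      by eventually_elim (meson D(2) card_le_Bq le_trans mult_le_mono2)
    show "Bq TYPE('a) n k \<delta> \<alpha> \<le> (\<alpha> - 1) * CARD('a) ^ ((k - t) * n)" for n
      using assms(3) \<delta>_t \<open>t < k\<close> by (intro Bq_le covering_code_card_le) auto
  qed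
  moreover have "real (CARD('a) ^ ((k - t) * n))
      = real CARD('a) powr ((real k - (real \<delta> - 1) / (real \<alpha> - 1)) * real n)" for n
    using \<delta>_t assms(3) \<open>t < k\<close>
    by (intro power_eq_powr_covering_exponent) (simp_all add: finite_UNIV_card_ge_0)
  ultimately show ?thesis
    by simp
qed

end
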